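(* Let $z:(0,\infty)\to[0,\infty)$ be nonincreasing and lower semi-continuous, set $c(\phi)=z(\phi)\phi$ for $\phi>0$, $c(0)=0$, and assume $\int_0^1\sqrt{c(\phi)}\,d\phi<\infty$. Let $\tau^z(w)=\inf\{F^c[\psi]\mid\psi:\mathbb{R}\to[0,\infty),\ \int_{\mathbb{R}}\psi\,dy=w\}$ and suppose that for some $W>0$ we have $\tau^z(w)=(\tau^z)'(0)\,w$ for all $w\in[0,W]$, where $(\tau^z)'(0)$ is the right derivative at $0$. Then for every $w\in(0,W)$ there is no $\psi:\mathbb{R}\to[0,\infty)$ with $\int_{\mathbb{R}}\psi\,dy=w$ and $F^c[\psi]=\tau^z(w)$.
   Context: For $c:[0,\infty)\to[0,\infty)$ and $\psi:\mathbb{R}\to\mathbb{R}$ (with locally integrable weak derivative; otherwise the energy is $+\infty$), $F^c[\psi]=\int_{\mathbb{R}}\frac12|\psi'(y)|^2+c(|\psi(y)|)\,dy$. *)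

theory Defs
  imports "HOL-Analysis.Analysis"
begin

definition lsc_on :: "real set \<Rightarrow> (real \<Rightarrow> real) \<Rightarrow> bool" where
  "lsc_on S f \<longleftrightarrow> (\<forall>x\<in>S. \<forall>t. t < f x \<longrightarrow> (\<forall>\<^sub>F y in at x within S. t < f y))"

definition test_function :: "(real \<Rightarrow> real) \<Rightarrow> bool" where
  "test_function \<phi> \<longleftrightarrow>
     (\<forall>k::nat. \<forall>x. ((deriv ^^ k) \<phi>) differentiable (at x)) \<and>
     (\<exists>R. \<forall>x. R < \<bar>x\<bar> \<longrightarrow> \<phi> x = 0)"

definition locally_integrable :: "(real \<Rightarrow> real) \<Rightarrow> bool" where
  "locally_integrable f \<longleftrightarrow> (\<forall>a b. set_integrable lborel {a..b} f)"

definition weak_deriv :: "(real \<Rightarrow> real) \<Rightarrow> (real \<Rightarrow> real) \<Rightarrow> bool" where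
  "weak_deriv \<psi> g \<longleftrightarrow> locally_integrable \<psi> \<and> locally_integrable g \<and>
     (\<forall>\<phi>. test_function \<phi> \<longrightarrow>
        (\<integral>y. \<psi> y * deriv \<phi> y \<partial>lborel) = - (\<integral>y. g y * \<phi> y \<partial>lborel))"

text \<open>The energy F^c[psi]; it is +infinity (Inf of the empty set) if psi has no
  locally integrable weak derivative. The integrand does not depend on the choice
  of the weak derivative up to null sets.\<close>
definition energy :: "(real \<Rightarrow> real) \<Rightarrow> (real \<Rightarrow> real) \<Rightarrow> ennreal" where
  "energy c \<psi> = (INF g\<in>{g. weak_deriv \<psi> g}.
      \<integral>\<^sup>+ y. ennreal ((g y)\<^sup>2 / 2 + c \<bar>\<psi> y\<bar>) \<partial>lborel)"

definition tau :: "(real \<Rightarrow> real) \<Rightarrow> real \<Rightarrow> ennreal" where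
  "tau c w = (INF \<psi>\<in>{\<psi>. (\<forall>y. 0 \<le> \<psi> y) \<and> integrable lborel \<psi> \<and> (\<integral>y. \<psi> y \<partial>lborel) = w}.
      energy c \<psi>)"

definition c_of :: "(real \<Rightarrow> real) \<Rightarrow> real \<Rightarrow> real" where
  "c_of z \<phi> = (if \<phi> > 0 then z \<phi> * \<phi> else 0)"

end

theory Submission
  imports Defs "HOL-Computational_Algebra.Polynomial"
begin

(* Suppose \<psi> had mass w \<in> (0, W) and energy \<tau>(w) = D w, with Dirichlet part A and potential
   part B. The dilation \<psi>(y/L), 1 < L \<le> W/w, has mass L w and energy A/L + L B, so
   D L w \<le> A/L + L B. Since \<tau> is an infimum, A + B is within any \<epsilon> of D w (for a suitable
   choice of weak derivative), which forces A (1 - 1/L\<^sup>2) < \<epsilon>. Hence \<psi> has weak derivatives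
   of arbitrarily small L\<^sup>2 norm, so \<integral> \<psi> \<phi>' = 0 for every test function \<phi>. Testing with
   differences of translates of a primitive of a bump shows that every mollification of \<psi>
   is constant, which is incompatible with 0 < \<integral> \<psi> < \<infinity>. *)

section \<open>Smooth functions\<close>

coinductive smooth :: "(real \<Rightarrow> real) \<Rightarrow> bool" where
  smoothI: "(\<And>x. f differentiable (at x)) \<Longrightarrow> smooth (deriv f) \<Longrightarrow> smooth f"

lemma smooth_iff_differentiable_iterated_deriv:
  "smooth f \<longleftrightarrow> (\<forall>k x. ((deriv ^^ k) f) differentiable (at x))"
proof
  assume "smooth f"
  have "smooth ((deriv ^^ k) f)" for k
    by (induction k) (use \<open>smooth f\<close> in \<open>auto elim: smooth.cases\<close>)
  then show "\<forall>k x. ((deriv ^^ k) f) differentiable (at x)"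
    by (auto elim: smooth.cases)
next
  assume "\<forall>k x. ((deriv ^^ k) f) differentiable (at x)"
  then show "smooth f"
  proof (coinduction arbitrary: f)
    case (smooth f)
    have "\<forall>k x. ((deriv ^^ k) (deriv f)) differentiable (at x)"
      using smooth by (metis funpow_Suc_right o_apply)
    moreover have "\<And>x. f differentiable (at x)"
      using smooth[rule_format, of 0] by simp
    ultimately show ?case by blast
  qed
qed

lemma smooth_differentiable: "smooth f \<Longrightarrow> f differentiable (at x)"
  by (auto elim: smooth.cases)

lemma smooth_const: "smooth (\<lambda>x. k)"
proof (coinduction arbitrary: k)
  case (smooth k)
  have "deriv (\<lambda>x. k) = (\<lambda>x. 0)"
    by (rule ext) (simp add: DERIV_imp_deriv)
  then show ?case by auto
qed

lemma smooth_compose_affine: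
  assumes "smooth g"
  shows "smooth (\<lambda>x. g (a * x + b))"
proof -
  have "smooth (\<lambda>x. c * g (a * x + b))" if "smooth g" for c g
    using that
  proof (coinduction arbitrary: c g)
    case (smooth c g)
    have dg: "\<And>x. g differentiable (at x)" and sg: "smooth (deriv g)"
      using smooth by (auto elim: smooth.cases)
    have D: "((\<lambda>x. c * g (a * x + b)) has_real_derivative c * a * deriv g (a * x + b)) (at x)" for x
    proof -
      have "(g has_real_derivative deriv g (a * x + b)) (at (a * x + b))"
        using dg DERIV_deriv_iff_real_differentiable by blast
      then have "((\<lambda>x. g (a * x + b)) has_real_derivative deriv g (a * x + b) * a) (at x)"
        by (rule DERIV_chain2) (auto intro!: derivative_eq_intros)
      then show ?thesis by (auto intro!: derivative_eq_intros simp: algebra_simps)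
    qed
    have "deriv (\<lambda>x. c * g (a * x + b)) = (\<lambda>x. (c * a) * deriv g (a * x + b))"
      using D by (intro ext DERIV_imp_deriv) simp
    then show ?case using D sg real_differentiable_def by metis
  qed
  from this[of g 1] assms show ?thesis by simp
qed

definition sum_of_products :: "((real \<Rightarrow> real) \<times> (real \<Rightarrow> real)) list \<Rightarrow> real \<Rightarrow> real" where
  "sum_of_products ps x = (\<Sum>(p, q)\<leftarrow>ps. p x * q x)"

definition leibniz_terms ::
    "((real \<Rightarrow> real) \<times> (real \<Rightarrow> real)) list \<Rightarrow> ((real \<Rightarrow> real) \<times> (real \<Rightarrow> real)) list" where
  "leibniz_terms ps = concat (map (\<lambda>(p, q). [(deriv p, q), (p, deriv q)]) ps)"

lemma sum_of_products_has_real_derivative: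
  assumes "\<forall>(p, q)\<in>set ps. (\<forall>x. p differentiable (at x)) \<and> (\<forall>x. q differentiable (at x))"
  shows "(sum_of_products ps has_real_derivative sum_of_products (leibniz_terms ps) x) (at x)"
  using assms
proof (induction ps)
  case Nil
  then show ?case by (simp add: sum_of_products_def leibniz_terms_def)
next
  case (Cons pq ps)
  obtain p q where pq: "pq = (p, q)" by fastforce
  have dp: "(p has_real_derivative deriv p x) (at x)" and dq: "(q has_real_derivative deriv q x) (at x)"
    using Cons.prems pq DERIV_deriv_iff_real_differentiable by auto
  have "(sum_of_products ps has_real_derivative sum_of_products (leibniz_terms ps) x) (at x)"
    using Cons by auto
  from DERIV_add[OF DERIV_mult[OF dp dq] this] show ?case
    by (simp add: sum_of_products_def leibniz_terms_def pq algebra_simps)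
qed

(* Products alone are not closed under deriv, sums of products are: this makes them a
   coinduction invariant for smooth. *)
lemma smooth_sum_of_products:
  assumes "\<forall>(p, q)\<in>set ps. smooth p \<and> smooth q"
  shows "smooth (sum_of_products ps)"
  using assms
proof (coinduction arbitrary: ps)
  case (smooth ps)
  have "\<forall>(p, q)\<in>set ps. (\<forall>x. p differentiable (at x)) \<and> (\<forall>x. q differentiable (at x))"
    using smooth by (auto intro: smooth_differentiable)
  note D = sum_of_products_has_real_derivative[OF this]
  have "deriv (sum_of_products ps) = sum_of_products (leibniz_terms ps)"
    using D by (intro ext DERIV_imp_deriv)
  moreover have "\<forall>(p, q)\<in>set (leibniz_terms ps). smooth p \<and> smooth q"
    using smooth by (auto simp: leibniz_terms_def elim: smooth.cases)
  ultimately show ?case using D real_differentiable_def by metis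
qed

lemma smooth_mult: "smooth f \<Longrightarrow> smooth g \<Longrightarrow> smooth (\<lambda>x. f x * g x)"
  using smooth_sum_of_products[of "[(f, g)]"] by (simp add: sum_of_products_def[abs_def])

lemma smooth_diff: "smooth f \<Longrightarrow> smooth g \<Longrightarrow> smooth (\<lambda>x. f x - g x)"
  using smooth_sum_of_products[of "[(f, \<lambda>_. 1), (g, \<lambda>_. -1)]"] smooth_const
  by (simp add: sum_of_products_def[abs_def])

section \<open>Bump functions\<close>

definition poly_exp_neg_inverse :: "real poly \<Rightarrow> real \<Rightarrow> real" where
  "poly_exp_neg_inverse p t = (if t > 0 then poly p (1 / t) * exp (- 1 / t) else 0)"

lemma poly_times_div_exp_tendsto_0: "((\<lambda>x. poly p x * x / exp x) \<longlongrightarrow> (0::real)) at_top"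
proof -
  have expand: "poly p x * x / exp x = (\<Sum>i\<le>degree p. coeff p i * (x ^ Suc i / exp x))" for x
    unfolding poly_altdef
    by (simp add: sum_distrib_left sum_distrib_right sum_divide_distrib mult_ac)
  have "((\<lambda>x. \<Sum>i\<le>degree p. coeff p i * (x ^ Suc i / exp x)) \<longlongrightarrow> (\<Sum>i\<le>degree p. coeff p i * 0)) at_top"
    by (intro tendsto_sum tendsto_mult tendsto_const tendsto_power_div_exp_0)
  then show ?thesis unfolding expand by simp
qed

lemma poly_exp_neg_inverse_has_real_derivative:
  "(poly_exp_neg_inverse p has_real_derivative
      poly_exp_neg_inverse ([:0, 0, 1:] * (p - pderiv p)) t) (at t)"
proof -
  consider "t > 0" | "t < 0" | "t = 0" by linarith
  then show ?thesis
  proof cases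
    case 1
    have "((\<lambda>t. poly p (1/t) * exp (-1/t)) has_real_derivative
        poly (pderiv p) (1/t) * (- 1 / t^2) * exp (-1/t) + poly p (1/t) * (exp (-1/t) * (1/t^2))) (at t)"
      using 1 by (auto intro!: derivative_eq_intros DERIV_chain2[OF poly_DERIV]
          simp: power2_eq_square field_simps)
    moreover have "poly (pderiv p) (1/t) * (- 1 / t^2) * exp (-1/t) + poly p (1/t) * (exp (-1/t) * (1/t^2))
        = poly_exp_neg_inverse ([:0, 0, 1:] * (p - pderiv p)) t"
      using 1 by (simp add: poly_exp_neg_inverse_def algebra_simps power2_eq_square)
    ultimately show ?thesis
      by (auto intro: has_field_derivative_transform_within_open[where S="{0<..}"]
          simp: poly_exp_neg_inverse_def 1)
  next
    case 2
    have "((\<lambda>t. 0) has_real_derivative poly_exp_neg_inverse ([:0, 0, 1:] * (p - pderiv p)) t) (at t)"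
      using 2 by (simp add: poly_exp_neg_inverse_def)
    then show ?thesis
      by (rule has_field_derivative_transform_within_open[where S="{..<0}"])
        (use 2 in \<open>auto simp: poly_exp_neg_inverse_def\<close>)
  next
    case 3
    have left: "((\<lambda>h. poly_exp_neg_inverse p h / h) \<longlongrightarrow> 0) (at_left 0)"
    proof (rule tendsto_eventually)
      show "\<forall>\<^sub>F h in at_left 0. poly_exp_neg_inverse p h / h = 0"
        using eventually_at_left_real[of "-1::real" 0, simplified]
        by eventually_elim (auto simp: poly_exp_neg_inverse_def)
    qed
    have "((\<lambda>x. poly_exp_neg_inverse p (inverse x) / inverse x) \<longlongrightarrow> 0) at_top"
    proof (rule Lim_transform_eventually[OF poly_times_div_exp_tendsto_0])
      show "\<forall>\<^sub>F x in at_top. poly p x * x / exp x = poly_exp_neg_inverse p (inverse x) / inverse x"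
        using eventually_gt_at_top[of 0]
        by eventually_elim (simp add: poly_exp_neg_inverse_def exp_minus field_simps)
    qed
    then have right: "((\<lambda>h. poly_exp_neg_inverse p h / h) \<longlongrightarrow> 0) (at_right 0)"
      unfolding at_right_to_top filterlim_filtermap by simp
    have "((\<lambda>h. poly_exp_neg_inverse p h / h) \<longlongrightarrow> 0) (at 0)"
      using left right filterlim_at_split by blast
    then have "((\<lambda>h. (poly_exp_neg_inverse p (0 + h) - poly_exp_neg_inverse p 0) / h) \<longlongrightarrow>
        poly_exp_neg_inverse ([:0, 0, 1:] * (p - pderiv p)) 0) (at 0)"
      by (simp add: poly_exp_neg_inverse_def)
    then show ?thesis using 3 unfolding DERIV_def by simp
  qed
qed

lemma smooth_poly_exp_neg_inverse: "smooth (poly_exp_neg_inverse p)"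
proof (coinduction arbitrary: p)
  case (smooth p)
  have "deriv (poly_exp_neg_inverse p) = poly_exp_neg_inverse ([:0, 0, 1:] * (p - pderiv p))"
    using poly_exp_neg_inverse_has_real_derivative by (intro ext DERIV_imp_deriv)
  then show ?case
    using poly_exp_neg_inverse_has_real_derivative real_differentiable_def by metis
qed

definition bump :: "real \<Rightarrow> real" where
  "bump t = poly_exp_neg_inverse 1 t * poly_exp_neg_inverse 1 (1 - t)"

lemma smooth_bump: "smooth bump"
proof -
  have "smooth (\<lambda>t. poly_exp_neg_inverse 1 ((-1) * t + 1))"
    by (rule smooth_compose_affine[OF smooth_poly_exp_neg_inverse])
  then show ?thesis
    unfolding bump_def[abs_def] by (intro smooth_mult smooth_poly_exp_neg_inverse) simp
qed

lemma bump_nonneg: "0 \<le> bump t"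
  by (simp add: bump_def poly_exp_neg_inverse_def)

lemma bump_le_1: "bump t \<le> 1"
  unfolding bump_def poly_exp_neg_inverse_def by (auto intro: mult_le_one)

lemma bump_eq_0: "t \<le> 0 \<or> 1 \<le> t \<Longrightarrow> bump t = 0"
  by (auto simp: bump_def poly_exp_neg_inverse_def)

lemma exp_le_bump:
  assumes "1/4 \<le> t" "t \<le> 3/4"
  shows "exp (-8) \<le> bump t"
proof -
  have "exp (-4) \<le> exp (-1/t)" "exp (-4) \<le> exp (-1/(1 - t))"
    using assms by (simp_all add: field_simps)
  then have "exp (-4) * exp (-4) \<le> exp (-1/t) * exp (-1/(1 - t))"
    by (intro mult_mono) auto
  then show ?thesis
    using assms by (simp add: bump_def poly_exp_neg_inverse_def flip: exp_add)
qed

lemma continuous_on_bump: "continuous_on A bump"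
  using smooth_differentiable[OF smooth_bump]
  by (intro continuous_at_imp_continuous_on) (auto intro: differentiable_imp_continuous_within)

lemma borel_measurable_bump [measurable]: "bump \<in> borel_measurable borel"
  by (intro borel_measurable_continuous_onI continuous_on_bump)

lemma nn_integral_bump_pos: "0 < (\<integral>\<^sup>+ x. ennreal (bump x) \<partial>lborel)"
proof -
  have "ennreal (exp (-8)) * ennreal (1/2) = (\<integral>\<^sup>+ x. ennreal (exp (-8)) * indicator {1/4..3/4::real} x \<partial>lborel)"
    by (subst nn_integral_cmult_indicator) auto
  also have "\<dots> \<le> (\<integral>\<^sup>+ x. ennreal (bump x) \<partial>lborel)"
    by (intro nn_integral_mono) (auto simp: indicator_def intro!: ennreal_leI exp_le_bump)
  moreover have "0 < ennreal (exp (-8)) * ennreal (1/2)"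
    by (simp only: ennreal_zero_less_mult_iff ennreal_less_zero_iff) simp
  ultimately show ?thesis by order
qed

lemma nn_integral_bump_finite: "(\<integral>\<^sup>+ x. ennreal (bump x) \<partial>lborel) < \<infinity>"
proof -
  have "(\<integral>\<^sup>+ x. ennreal (bump x) \<partial>lborel) \<le> (\<integral>\<^sup>+ x. 1 * indicator {0..1::real} x \<partial>lborel)"
    by (intro nn_integral_mono) (auto simp: indicator_def bump_le_1 bump_eq_0)
  also have "\<dots> = 1"
    by (subst nn_integral_cmult_indicator) auto
  finally show ?thesis by (simp add: le_less_trans)
qed

definition bump_primitive :: "real \<Rightarrow> real" where
  "bump_primitive t = integral {-1..t} bump"

lemma bump_primitive_eq_0: "t \<le> 0 \<Longrightarrow> bump_primitive t = 0"
  unfolding bump_primitive_def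
  by (subst Henstock_Kurzweil_Integration.integral_cong[where g="\<lambda>_. 0"]) (auto intro: bump_eq_0)

lemma bump_primitive_eq_const:
  assumes "1 \<le> t"
  shows "bump_primitive t = bump_primitive 1"
proof -
  have "integral {-1..1} bump + integral {1..t} bump = integral {-1..t} bump"
    using assms by (intro Henstock_Kurzweil_Integration.integral_combine
        integrable_continuous_interval continuous_on_bump) auto
  moreover have "integral {1..t} bump = 0"
    by (subst Henstock_Kurzweil_Integration.integral_cong[where g="\<lambda>_. 0"]) (auto intro: bump_eq_0)
  ultimately show ?thesis by (simp add: bump_primitive_def)
qed

lemma bump_primitive_has_real_derivative: "(bump_primitive has_real_derivative bump t) (at t)"
proof (cases "t > -1")
  case True
  have "(bump_primitive has_real_derivative bump t) (at t within {-1..t+1})"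
    unfolding bump_primitive_def[abs_def] using True
    by (intro integral_has_real_derivative continuous_on_bump) auto
  then show ?thesis using True by (simp add: at_within_Icc_at)
next
  case False
  have "((\<lambda>_. 0) has_real_derivative bump t) (at t)"
    using False bump_eq_0 by simp
  then show ?thesis
    by (rule has_field_derivative_transform_within_open[where S="{..<0}"])
      (use False bump_primitive_eq_0 in auto)
qed

lemma smooth_bump_primitive: "smooth bump_primitive"
proof (rule smoothI)
  show "bump_primitive differentiable (at x)" for x
    using bump_primitive_has_real_derivative real_differentiable_def by blast
  have "deriv bump_primitive = bump"
    using bump_primitive_has_real_derivative by (intro ext DERIV_imp_deriv)
  then show "smooth (deriv bump_primitive)"
    using smooth_bump by simp
qed

definition plateau :: "real \<Rightarrow> real \<Rightarrow> real \<Rightarrow> real" where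
  "plateau a b y = bump_primitive (y - a) - bump_primitive (y - b)"

lemma deriv_plateau: "deriv (plateau a b) y = bump (y - a) - bump (y - b)"
proof -
  have "((\<lambda>y. bump_primitive (y - a)) has_real_derivative bump (y - a)) (at y)" for a
  proof -
    have "((\<lambda>y. y - a) has_real_derivative 1) (at y)"
      by (auto intro!: derivative_eq_intros)
    from DERIV_chain2[OF bump_primitive_has_real_derivative this] show ?thesis by simp
  qed
  then have "(plateau a b has_real_derivative bump (y - a) - bump (y - b)) (at y)"
    unfolding plateau_def[abs_def] by (intro DERIV_diff)
  then show ?thesis by (rule DERIV_imp_deriv)
qed

lemma test_function_plateau: "test_function (plateau a b)"
  unfolding test_function_def
proof
  have "smooth (\<lambda>y. bump_primitive (1 * y + (-a)) - bump_primitive (1 * y + (-b)))"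
    by (intro smooth_diff smooth_compose_affine smooth_bump_primitive)
  then show "\<forall>k x. (deriv ^^ k) (plateau a b) differentiable at x"
    by (simp add: plateau_def[abs_def] smooth_iff_differentiable_iterated_deriv[symmetric])
  have "plateau a b x = 0" if "\<bar>a\<bar> + \<bar>b\<bar> + 1 < \<bar>x\<bar>" for x
  proof -
    have "(x - a \<le> 0 \<and> x - b \<le> 0) \<or> (1 \<le> x - a \<and> 1 \<le> x - b)"
      using that by (cases "x \<ge> 0") (auto simp: abs_if split: if_splits)
    then show ?thesis
      unfolding plateau_def
      using bump_primitive_eq_0 bump_primitive_eq_const[of "x - a"] bump_primitive_eq_const[of "x - b"]
      by auto
  qed
  then show "\<exists>R. \<forall>x. R < \<bar>x\<bar> \<longrightarrow> plateau a b x = 0" by blast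
qed

section \<open>Weak derivatives under dilation\<close>

lemma locally_integrable_borel_measurable:
  assumes "locally_integrable f"
  shows "f \<in> borel_measurable borel"
proof -
  let ?f = "\<lambda>(i::nat) x. indicator {- real i..real i} x *\<^sub>R f x"
  have measurable: "?f i \<in> borel_measurable lborel" for i
    using assms unfolding locally_integrable_def set_integrable_def by blast
  have "(\<lambda>i. ?f i x) \<longlonglongrightarrow> f x" for x
  proof (rule tendsto_eventually)
    show "\<forall>\<^sub>F i in sequentially. ?f i x = f x"
      using eventually_ge_at_top[of "nat \<lceil>\<bar>x\<bar>\<rceil>"]
    proof eventually_elim
      case (elim i)
      then have "\<bar>x\<bar> \<le> real i" by linarith
      then show ?case by (auto simp: indicator_def abs_le_iff)
    qed
  qed
  then have "f \<in> borel_measurable lborel"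
    by (intro borel_measurable_LIMSEQ_real[OF _ measurable]) auto
  then show ?thesis by simp
qed

lemma locally_integrable_dilate:
  assumes "locally_integrable f" "L > 0"
  shows "locally_integrable (\<lambda>y. f (y / L) / c)"
  unfolding locally_integrable_def set_integrable_def
proof (intro allI)
  fix a b
  have "integrable lborel (\<lambda>u. indicator {a/L..b/L} u *\<^sub>R f u)"
    using assms(1) unfolding locally_integrable_def set_integrable_def by blast
  from lborel_integrable_real_affine[OF this, of "1/L" 0]
  have "integrable lborel (\<lambda>x. indicator {a/L..b/L} (x/L) *\<^sub>R f (x / L))"
    using assms(2) by simp
  moreover have "indicator {a/L..b/L} (x/L) = (indicator {a..b} x :: real)" for x
    using assms(2) by (simp add: indicator_def divide_le_cancel)
  ultimately have "integrable lborel (\<lambda>x. inverse c * (indicator {a..b} x *\<^sub>R f (x / L)))"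
    by (intro integrable_mult_right) simp
  then show "integrable lborel (\<lambda>x. indicator {a..b} x *\<^sub>R (f (x / L) / c))"
    by (simp add: divide_inverse mult_ac)
qed

lemma lborel_integral_dilate:
  fixes f :: "real \<Rightarrow> real"
  assumes "L > 0"
  shows "(\<integral>y. f (y / L) \<partial>lborel) = L * (\<integral>y. f y \<partial>lborel)"
proof -
  have "(\<integral>y. f (y / L) \<partial>lborel) = \<bar>L\<bar> *\<^sub>R (\<integral>x. f ((0 + L * x) / L) \<partial>lborel)"
    using assms by (intro lborel_integral_real_affine) simp
  then show ?thesis
    using assms by simp
qed

lemma integrable_dilate:
  fixes f :: "real \<Rightarrow> real"
  assumes "integrable lborel f" "L > 0"
  shows "integrable lborel (\<lambda>y. f (y / L))"
  using lborel_integrable_real_affine[OF assms(1), of "1 / L" 0] assms(2) by simp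

lemma test_function_dilate:
  assumes "test_function \<phi>" "L \<noteq> 0"
  shows "test_function (\<lambda>u. \<phi> (L * u))"
proof -
  have "smooth \<phi>"
    using assms(1) unfolding test_function_def smooth_iff_differentiable_iterated_deriv by blast
  then have "smooth (\<lambda>u. \<phi> (L * u + 0))" by (rule smooth_compose_affine)
  then have "\<forall>k x. (deriv ^^ k) (\<lambda>u. \<phi> (L * u)) differentiable at x"
    unfolding smooth_iff_differentiable_iterated_deriv by simp
  moreover obtain R where R: "\<forall>x. R < \<bar>x\<bar> \<longrightarrow> \<phi> x = 0"
    using assms(1) unfolding test_function_def by blast
  have "\<phi> (L * u) = 0" if "\<bar>R\<bar> / \<bar>L\<bar> < \<bar>u\<bar>" for u
  proof -
    have "\<bar>R\<bar> < \<bar>L * u\<bar>"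
      using that assms(2) by (simp add: field_simps abs_mult)
    then show ?thesis using R by auto
  qed
  ultimately show ?thesis unfolding test_function_def by blast
qed

lemma deriv_dilate:
  assumes "test_function \<phi>"
  shows "deriv (\<lambda>u. \<phi> (L * u)) u = L * deriv \<phi> (L * u)"
proof -
  have "\<phi> differentiable at (L * u)"
    using assms unfolding test_function_def by (metis funpow_0)
  then have "(\<phi> has_real_derivative deriv \<phi> (L * u)) (at (L * u))"
    using DERIV_deriv_iff_real_differentiable by blast
  moreover have "((\<lambda>u. L * u) has_real_derivative L) (at u)"
    by (auto intro!: derivative_eq_intros)
  ultimately show ?thesis
    by (intro DERIV_imp_deriv) (drule (1) DERIV_chain2, simp add: mult.commute)
qed

(* The substitution y = L u turns the defining identity for the test function \<phi>
   into that for \<phi>(L \<cdot>), which is again a test function. *)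
lemma weak_deriv_dilate:
  assumes g: "weak_deriv \<psi> g" and L: "L > 0"
  shows "weak_deriv (\<lambda>y. \<psi> (y / L)) (\<lambda>y. g (y / L) / L)"
  unfolding weak_deriv_def
proof (intro conjI allI impI)
  show "locally_integrable (\<lambda>y. \<psi> (y / L))"
    using locally_integrable_dilate[of \<psi> L 1] g L unfolding weak_deriv_def by simp
  show "locally_integrable (\<lambda>y. g (y / L) / L)"
    using locally_integrable_dilate g L unfolding weak_deriv_def by blast
  fix \<phi> assume \<phi>: "test_function \<phi>"
  have cancel: "L * (y / L) = y" for y
    using L by simp
  have "(\<integral>y. \<psi> (y / L) * deriv \<phi> y \<partial>lborel) = L * (\<integral>u. \<psi> u * deriv \<phi> (L * u) \<partial>lborel)"
    using lborel_integral_dilate[OF L, of "\<lambda>u. \<psi> u * deriv \<phi> (L * u)"] by (simp only: cancel)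
  also have "\<dots> = (\<integral>u. \<psi> u * deriv (\<lambda>u. \<phi> (L * u)) u \<partial>lborel)"
    by (simp only: deriv_dilate[OF \<phi>] mult.left_commute integral_mult_right_zero)
  also have "\<dots> = - (\<integral>u. g u * \<phi> (L * u) \<partial>lborel)"
    using g test_function_dilate[OF \<phi>] L unfolding weak_deriv_def by simp
  also have "(\<integral>u. g u * \<phi> (L * u) \<partial>lborel) = L * (\<integral>u. inverse L * (g u * \<phi> (L * u)) \<partial>lborel)"
    using L by (simp only: integral_mult_right_zero) simp
  also have "\<dots> = (\<integral>y. g (y / L) / L * \<phi> y \<partial>lborel)"
    using lborel_integral_dilate[OF L, of "\<lambda>u. inverse L * (g u * \<phi> (L * u))"]
    by (simp only: cancel) (auto simp: divide_inverse mult_ac)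
  finally show "(\<integral>y. \<psi> (y / L) * deriv \<phi> y \<partial>lborel) = - (\<integral>y. g (y / L) / L * \<phi> y \<partial>lborel)" .
qed

section \<open>Functions with vanishing weak derivative\<close>

lemma integrable_mult_shifted_bump:
  assumes "integrable lborel \<psi>"
  shows "integrable lborel (\<lambda>y. \<psi> y * bump (y - a))"
proof (rule Bochner_Integration.integrable_bound[OF assms])
  have [measurable]: "\<psi> \<in> borel_measurable borel"
    using borel_measurable_integrable[OF assms] by simp
  show "(\<lambda>y. \<psi> y * bump (y - a)) \<in> borel_measurable lborel" by measurable
  show "AE y in lborel. norm (\<psi> y * bump (y - a)) \<le> norm (\<psi> y)"
    using bump_le_1 bump_nonneg by (auto simp: abs_mult intro!: mult_left_le)
qed

lemma integral_mult_shifted_bump_eq: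
  assumes "integrable lborel \<psi>"
    and "\<forall>\<phi>. test_function \<phi> \<longrightarrow> (\<integral>y. \<psi> y * deriv \<phi> y \<partial>lborel) = 0"
  shows "(\<integral>y. \<psi> y * bump (y - a) \<partial>lborel) = (\<integral>y. \<psi> y * bump (y - b) \<partial>lborel)"
proof -
  have "0 = (\<integral>y. \<psi> y * deriv (plateau a b) y \<partial>lborel)"
    using assms(2) test_function_plateau by simp
  also have "\<dots> = (\<integral>y. \<psi> y * bump (y - a) - \<psi> y * bump (y - b) \<partial>lborel)"
    by (simp add: deriv_plateau right_diff_distrib)
  also have "\<dots> = (\<integral>y. \<psi> y * bump (y - a) \<partial>lborel) - (\<integral>y. \<psi> y * bump (y - b) \<partial>lborel)"
    by (intro Bochner_Integration.integral_diff integrable_mult_shifted_bump assms(1))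
  finally show ?thesis by simp
qed

(* The mollifications H a = \<integral> \<psi>(y) bump(y - a) dy do not depend on a; integrating over a
   and using Fubini, H 0 \<cdot> \<infinity> = (\<integral> \<psi>) \<cdot> (\<integral> bump), where 0 < \<integral> bump < \<infinity>. *)
lemma integral_eq_0_if_weak_deriv_0:
  assumes nonneg: "\<forall>y. 0 \<le> \<psi> y" and int: "integrable lborel \<psi>"
    and weak_deriv_0: "\<forall>\<phi>. test_function \<phi> \<longrightarrow> (\<integral>y. \<psi> y * deriv \<phi> y \<partial>lborel) = 0"
  shows "(\<integral>y. \<psi> y \<partial>lborel) = 0"
proof (rule ccontr)
  assume "(\<integral>y. \<psi> y \<partial>lborel) \<noteq> 0"
  then have mass_pos: "0 < (\<integral>y. \<psi> y \<partial>lborel)"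
    using nonneg by (simp add: order_less_le)
  have [measurable]: "\<psi> \<in> borel_measurable borel"
    using borel_measurable_integrable[OF int] by simp
  define H where "H a = (\<integral>y. \<psi> y * bump (y - a) \<partial>lborel)" for a
  define I where "I = (\<integral>\<^sup>+ x. ennreal (bump x) \<partial>lborel)"
  have H: "ennreal (H a) = (\<integral>\<^sup>+ y. ennreal (\<psi> y * bump (y - a)) \<partial>lborel)" for a
    unfolding H_def using nonneg bump_nonneg
    by (intro nn_integral_eq_integral[symmetric] integrable_mult_shifted_bump int) auto
  have inner: "(\<integral>\<^sup>+ a. ennreal (\<psi> y * bump (y - a)) \<partial>lborel) = ennreal (\<psi> y) * I" for y
  proof -
    have "(\<integral>\<^sup>+ a. ennreal (\<psi> y * bump (y - a)) \<partial>lborel)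
        = ennreal (\<psi> y) * (\<integral>\<^sup>+ a. ennreal (bump (y + (-1) * a)) \<partial>lborel)"
      using nonneg bump_nonneg by (subst nn_integral_cmult[symmetric]) (auto simp: ennreal_mult)
    also have "(\<integral>\<^sup>+ a. ennreal (bump (y + (-1) * a)) \<partial>lborel) = I"
      using nn_integral_real_affine[of "\<lambda>x. ennreal (bump x)" "-1" y] unfolding I_def by simp
    finally show ?thesis .
  qed
  have "ennreal (H 0) * \<infinity> = (\<integral>\<^sup>+ a. ennreal (H a) \<partial>lborel)"
    using integral_mult_shifted_bump_eq[OF int weak_deriv_0, of 0] by (simp add: H_def)
  also have "\<dots> = (\<integral>\<^sup>+ y. (\<integral>\<^sup>+ a. ennreal (\<psi> y * bump (y - a)) \<partial>lborel) \<partial>lborel)"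
    unfolding H by (intro lborel_pair.Fubini') measurable
  also have "\<dots> = (\<integral>\<^sup>+ y. ennreal (\<psi> y) \<partial>lborel) * I"
    by (simp add: inner nn_integral_multc)
  also have "\<dots> = ennreal (\<integral>y. \<psi> y \<partial>lborel) * I"
    using nonneg by (subst nn_integral_eq_integral) (auto intro: int)
  finally have eq: "ennreal (H 0) * \<infinity> = ennreal (\<integral>y. \<psi> y \<partial>lborel) * I" .
  have "0 < ennreal (\<integral>y. \<psi> y \<partial>lborel) * I" "ennreal (\<integral>y. \<psi> y \<partial>lborel) * I < \<infinity>"
    using mass_pos nn_integral_bump_pos nn_integral_bump_finite
    by (simp_all add: I_def ennreal_zero_less_mult_iff ennreal_mult_less_top)
  then show False
    using eq by (cases "H 0 > 0") (auto simp: ennreal_mult_top ennreal_neg)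
qed

section \<open>The two parts of the energy\<close>

definition dirichlet_energy :: "(real \<Rightarrow> real) \<Rightarrow> ennreal" where
  "dirichlet_energy g = (\<integral>\<^sup>+ y. ennreal ((g y)\<^sup>2 / 2) \<partial>lborel)"

definition potential_energy :: "(real \<Rightarrow> real) \<Rightarrow> (real \<Rightarrow> real) \<Rightarrow> ennreal" where
  "potential_energy c \<psi> = (\<integral>\<^sup>+ y. ennreal (c \<bar>\<psi> y\<bar>) \<partial>lborel)"

lemma c_of_nonneg: "\<forall>\<phi>>0. 0 \<le> z \<phi> \<Longrightarrow> 0 \<le> c_of z x"
  by (simp add: c_of_def)

lemma borel_measurable_c_of:
  assumes "antimono_on {0<..} z"
  shows "c_of z \<in> borel_measurable borel"
proof -
  have "mono_on {0<..} (\<lambda>x. - z x)"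
    using assms unfolding monotone_on_def by auto
  then have "(\<lambda>x. - (- z x)) \<in> borel_measurable (restrict_space borel {0<..})"
    using borel_measurable_mono_on_fnc by measurable
  then have "(\<lambda>x. z x * x) \<in> borel_measurable (restrict_space borel {0<..})"
    by (intro borel_measurable_times) (auto intro: measurable_restrict_space1)
  then show ?thesis
    unfolding c_of_def[abs_def] by (subst measurable_If_restrict_space_iff) (auto simp: greaterThan_def)
qed

lemma nn_integral_energy_density:
  fixes g \<psi> c :: "real \<Rightarrow> real"
  assumes "\<forall>x. 0 \<le> c x" and [measurable]: "c \<in> borel_measurable borel"
    "g \<in> borel_measurable borel" "\<psi> \<in> borel_measurable borel"
  shows "(\<integral>\<^sup>+ y. ennreal ((g y)\<^sup>2 / 2 + c \<bar>\<psi> y\<bar>) \<partial>lborel)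
       = dirichlet_energy g + potential_energy c \<psi>"
proof -
  have "(\<integral>\<^sup>+ y. ennreal ((g y)\<^sup>2 / 2 + c \<bar>\<psi> y\<bar>) \<partial>lborel)
      = (\<integral>\<^sup>+ y. ennreal ((g y)\<^sup>2 / 2) + ennreal (c \<bar>\<psi> y\<bar>) \<partial>lborel)"
    using assms(1) by (intro nn_integral_cong) simp
  also have "\<dots> = dirichlet_energy g + potential_energy c \<psi>"
    unfolding dirichlet_energy_def potential_energy_def by (intro nn_integral_add) measurable
  finally show ?thesis .
qed

lemma energy_lessE:
  fixes c \<psi> :: "real \<Rightarrow> real"
  assumes "\<forall>x. 0 \<le> c x" "c \<in> borel_measurable borel" "\<psi> \<in> borel_measurable borel"
    and "energy c \<psi> < e"
  obtains g where "weak_deriv \<psi> g" "dirichlet_energy g + potential_energy c \<psi> < e"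
proof -
  obtain g where g: "weak_deriv \<psi> g"
    and less: "(\<integral>\<^sup>+ y. ennreal ((g y)\<^sup>2 / 2 + c \<bar>\<psi> y\<bar>) \<partial>lborel) < e"
    using assms(4) unfolding energy_def by (subst (asm) INF_less_iff) blast
  have "g \<in> borel_measurable borel"
    using g locally_integrable_borel_measurable unfolding weak_deriv_def by blast
  then have "dirichlet_energy g + potential_energy c \<psi> < e"
    using less nn_integral_energy_density[OF assms(1,2) _ assms(3)] by simp
  with g show ?thesis by (rule that)
qed

lemma energy_dilate_le:
  fixes c \<psi> g :: "real \<Rightarrow> real"
  assumes c: "\<forall>x. 0 \<le> c x" and [measurable]: "c \<in> borel_measurable borel"
    and \<psi>[measurable]: "\<psi> \<in> borel_measurable borel" and g: "weak_deriv \<psi> g" and L: "L > 0"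
  shows "energy c (\<lambda>y. \<psi> (y / L))
    \<le> ennreal L * (ennreal (1 / L\<^sup>2) * dirichlet_energy g + potential_energy c \<psi>)"
proof -
  have [measurable]: "g \<in> borel_measurable borel"
    using g locally_integrable_borel_measurable unfolding weak_deriv_def by blast
  let ?f = "\<lambda>y. ennreal ((g (y / L) / L)\<^sup>2 / 2 + c \<bar>\<psi> (y / L)\<bar>)"
  have "energy c (\<lambda>y. \<psi> (y / L)) \<le> integral\<^sup>N lborel ?f"
    unfolding energy_def using weak_deriv_dilate[OF g L] by (intro INF_lower) simp
  also have "\<dots> = ennreal L * (\<integral>\<^sup>+ x. ?f (0 + L * x) \<partial>lborel)"
    using nn_integral_real_affine[of ?f L 0] L by simp
  also have "(\<integral>\<^sup>+ x. ?f (0 + L * x) \<partial>lborel)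
      = (\<integral>\<^sup>+ x. ennreal (1 / L\<^sup>2) * ennreal ((g x)\<^sup>2 / 2) + ennreal (c \<bar>\<psi> x\<bar>) \<partial>lborel)"
  proof (rule nn_integral_cong)
    fix x
    have "(g x / L)\<^sup>2 / 2 = (1 / L\<^sup>2) * ((g x)\<^sup>2 / 2)"
      by (simp add: power_divide)
    then show "?f (0 + L * x) = ennreal (1 / L\<^sup>2) * ennreal ((g x)\<^sup>2 / 2) + ennreal (c \<bar>\<psi> x\<bar>)"
      using L c by (simp add: ennreal_mult[symmetric])
  qed
  also have "\<dots> = ennreal (1 / L\<^sup>2) * dirichlet_energy g + potential_energy c \<psi>"
    unfolding dirichlet_energy_def potential_energy_def
    by (subst nn_integral_add) (auto simp: nn_integral_cmult)
  finally show ?thesis .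
qed

lemma tau_le_energy:
  assumes "\<forall>y. 0 \<le> \<psi> y" "integrable lborel \<psi>" "(\<integral>y. \<psi> y \<partial>lborel) = w"
  shows "tau c w \<le> energy c \<psi>"
  unfolding tau_def using assms by (intro INF_lower) simp

lemma dirichlet_energy_of_minimiser_arbitrarily_small:
  fixes c \<psi> :: "real \<Rightarrow> real"
  assumes c: "\<forall>x. 0 \<le> c x" "c \<in> borel_measurable borel"
    and \<psi>: "\<forall>y. 0 \<le> \<psi> y" "integrable lborel \<psi>" "(\<integral>y. \<psi> y \<partial>lborel) = w"
    and energy: "energy c \<psi> = ennreal (D * w)"
    and L: "1 < L" and tau: "tau c (L * w) = ennreal (D * (L * w))"
    and \<epsilon>: "\<epsilon> > 0"
  shows "\<exists>g. weak_deriv \<psi> g \<and> dirichlet_energy g \<le> ennreal \<epsilon>"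
proof -
  have \<psi>_measurable: "\<psi> \<in> borel_measurable borel"
    using borel_measurable_integrable[OF \<psi>(2)] by simp
  have "1 / L\<^sup>2 < 1"
    using one_less_power[OF L, of 2] by (simp add: divide_less_eq)
  then have shrink: "0 < 1 - 1 / L\<^sup>2" by simp
  define d where "d = max 0 (D * w)"
  have "energy c \<psi> = ennreal d"
    unfolding energy d_def by (rule ennreal_max_0[symmetric])
  also have "\<dots> < ennreal (d + \<epsilon> * (1 - 1 / L\<^sup>2))"
    using \<epsilon> shrink by (intro ennreal_lessI) (auto simp: d_def add_nonneg_pos)
  finally obtain g where g: "weak_deriv \<psi> g"
    and less: "dirichlet_energy g + potential_energy c \<psi> < ennreal (d + \<epsilon> * (1 - 1 / L\<^sup>2))"
    using energy_lessE[OF c \<psi>_measurable] by blast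
  have "dirichlet_energy g < top" "potential_energy c \<psi> < top"
    using less_trans[OF less ennreal_less_top] by (auto simp: less_top[symmetric])
  then obtain a b where a: "0 \<le> a" "dirichlet_energy g = ennreal a"
    and b: "0 \<le> b" "potential_energy c \<psi> = ennreal b"
    unfolding less_top_ennreal by blast
  have "ennreal (a + b) < ennreal (d + \<epsilon> * (1 - 1 / L\<^sup>2))"
    using less a b by simp
  then have "a + b < d + \<epsilon> * (1 - 1 / L\<^sup>2)"
    by (subst (asm) ennreal_less_iff) (use a b in auto)
  moreover have "d \<le> a / L\<^sup>2 + b"
  proof -
    have "integrable lborel (\<lambda>y. \<psi> (y / L))" "(\<integral>y. \<psi> (y / L) \<partial>lborel) = L * w"
      using integrable_dilate[OF \<psi>(2)] lborel_integral_dilate[of L \<psi>] L \<psi>(3) by auto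
    then have "ennreal (D * (L * w)) \<le> energy c (\<lambda>y. \<psi> (y / L))"
      unfolding tau[symmetric] using \<psi>(1) by (intro tau_le_energy) auto
    also have "\<dots> \<le> ennreal L * (ennreal (1 / L\<^sup>2) * ennreal a + ennreal b)"
      using energy_dilate_le[OF c \<psi>_measurable g, of L] L a b by simp
    also have "\<dots> = ennreal (L * (a / L\<^sup>2 + b))"
      by (subst ennreal_mult) (use L a b in \<open>auto simp: ennreal_mult[symmetric]\<close>)
    finally have "L * (D * w) \<le> L * (a / L\<^sup>2 + b)"
      using L a b by (simp add: mult.left_commute)
    then show ?thesis
      using L a b by (simp add: d_def)
  qed
  ultimately have "a * (1 - 1 / L\<^sup>2) < \<epsilon> * (1 - 1 / L\<^sup>2)"
    by (simp add: algebra_simps)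
  then have "a < \<epsilon>"
    using shrink by simp
  with g a show ?thesis by auto
qed

section \<open>Weak derivatives of arbitrarily small energy\<close>

lemma continuous_on_test_function:
  assumes "test_function \<phi>"
  shows "continuous_on A \<phi>"
proof -
  have "\<phi> differentiable (at x)" for x
    using assms unfolding test_function_def by (metis funpow_0)
  then show ?thesis
    by (intro continuous_at_imp_continuous_on) (auto intro: differentiable_imp_continuous_within)
qed

lemma dirichlet_energy_test_function_finite:
  assumes "test_function \<phi>"
  shows "dirichlet_energy \<phi> < \<infinity>"
proof -
  obtain R where R: "\<forall>x. R < \<bar>x\<bar> \<longrightarrow> \<phi> x = 0"
    using assms unfolding test_function_def by blast
  have "integrable lborel (\<lambda>x. indicator {-R..R} x *\<^sub>R ((\<phi> x)\<^sup>2 / 2))"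
    using continuous_on_test_function[OF assms]
    by (intro borel_integrable_compact continuous_intros) auto
  moreover have "indicator {-R..R} x *\<^sub>R ((\<phi> x)\<^sup>2 / 2) = (\<phi> x)\<^sup>2 / 2" for x
    using R by (cases "\<bar>x\<bar> \<le> R") (auto simp: indicator_def abs_le_iff)
  ultimately have "integrable lborel (\<lambda>x. (\<phi> x)\<^sup>2 / 2)" by (simp only:)
  then show ?thesis
    unfolding dirichlet_energy_def by (subst nn_integral_eq_integral) auto
qed

lemma abs_mult_le_weighted_squares:
  fixes x y \<delta> :: real
  assumes "\<delta> > 0"
  shows "\<bar>x * y\<bar> \<le> (1 / \<delta>) * (x\<^sup>2 / 2) + \<delta> * (y\<^sup>2 / 2)"
proof -
  have "0 \<le> (\<bar>x\<bar> - \<delta> * \<bar>y\<bar>)\<^sup>2" by simp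
  then have "2 * \<delta> * \<bar>x * y\<bar> \<le> x\<^sup>2 + \<delta>\<^sup>2 * y\<^sup>2"
    by (simp add: power2_eq_square abs_mult algebra_simps)
  then show ?thesis
    using assms by (simp add: field_simps power2_eq_square)
qed

lemma abs_integral_mult_le_dirichlet_energy:
  fixes g \<phi> :: "real \<Rightarrow> real"
  assumes [measurable]: "g \<in> borel_measurable borel" "\<phi> \<in> borel_measurable borel"
    and \<delta>: "\<delta> > 0"
    and g: "dirichlet_energy g \<le> ennreal \<alpha>" and \<phi>: "dirichlet_energy \<phi> \<le> ennreal \<beta>"
    and "0 \<le> \<alpha>" "0 \<le> \<beta>"
  shows "\<bar>\<integral>y. g y * \<phi> y \<partial>lborel\<bar> \<le> \<alpha> / \<delta> + \<delta> * \<beta>"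
proof -
  have "(\<integral>\<^sup>+ y. ennreal \<bar>g y * \<phi> y\<bar> \<partial>lborel)
      \<le> (\<integral>\<^sup>+ y. ennreal (1 / \<delta>) * ennreal ((g y)\<^sup>2 / 2) + ennreal \<delta> * ennreal ((\<phi> y)\<^sup>2 / 2) \<partial>lborel)"
  proof (rule nn_integral_mono)
    fix y
    have "ennreal \<bar>g y * \<phi> y\<bar> \<le> ennreal ((1 / \<delta>) * ((g y)\<^sup>2 / 2) + \<delta> * ((\<phi> y)\<^sup>2 / 2))"
      using abs_mult_le_weighted_squares[OF \<delta>] by (rule ennreal_leI)
    also have "\<dots> = ennreal (1 / \<delta>) * ennreal ((g y)\<^sup>2 / 2) + ennreal \<delta> * ennreal ((\<phi> y)\<^sup>2 / 2)"
    proof -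
      have "0 \<le> 1 / \<delta> * ((g y)\<^sup>2 / 2)" "0 \<le> \<delta> * ((\<phi> y)\<^sup>2 / 2)" "0 \<le> 1 / \<delta>" "0 \<le> \<delta>"
        using \<delta> by simp_all
      then show ?thesis by (simp only: ennreal_plus ennreal_mult')
    qed
    finally show "ennreal \<bar>g y * \<phi> y\<bar>
        \<le> ennreal (1 / \<delta>) * ennreal ((g y)\<^sup>2 / 2) + ennreal \<delta> * ennreal ((\<phi> y)\<^sup>2 / 2)" .
  qed
  also have "\<dots> = ennreal (1 / \<delta>) * dirichlet_energy g + ennreal \<delta> * dirichlet_energy \<phi>"
    unfolding dirichlet_energy_def by (subst nn_integral_add) (auto simp: nn_integral_cmult)
  also have "\<dots> \<le> ennreal (1 / \<delta>) * ennreal \<alpha> + ennreal \<delta> * ennreal \<beta>"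
    using g \<phi> by (intro add_mono mult_left_mono) auto
  also have "\<dots> = ennreal (\<alpha> / \<delta> + \<delta> * \<beta>)"
    using \<delta> assms(6,7) by (simp add: ennreal_mult[symmetric])
  finally have "(\<integral>y. \<bar>g y * \<phi> y\<bar> \<partial>lborel) \<le> \<alpha> / \<delta> + \<delta> * \<beta>"
    by (rule integral_real_bounded[rotated]) (use \<delta> assms(6,7) in simp)
  then show ?thesis
    by (rule order_trans[OF integral_abs_bound])
qed

lemma integral_mult_deriv_eq_0_if_dirichlet_energy_small:
  assumes small: "\<And>\<epsilon>. \<epsilon> > 0 \<Longrightarrow> \<exists>g. weak_deriv \<psi> g \<and> dirichlet_energy g \<le> ennreal \<epsilon>"
    and \<phi>: "test_function \<phi>"
  shows "(\<integral>y. \<psi> y * deriv \<phi> y \<partial>lborel) = 0"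
proof -
  define X where "X = \<bar>\<integral>y. \<psi> y * deriv \<phi> y \<partial>lborel\<bar>"
  have [measurable]: "\<phi> \<in> borel_measurable borel"
    using continuous_on_test_function[OF \<phi>] by (rule borel_measurable_continuous_onI)
  obtain \<beta> where \<beta>: "0 \<le> \<beta>" "dirichlet_energy \<phi> = ennreal \<beta>"
    using dirichlet_energy_test_function_finite[OF \<phi>] by (cases "dirichlet_energy \<phi>") auto
  have bound: "X \<le> \<epsilon> / \<delta> + \<delta> * \<beta>" if \<epsilon>: "\<epsilon> > 0" and \<delta>: "\<delta> > 0" for \<epsilon> \<delta>
  proof -
    obtain g where g: "weak_deriv \<psi> g" "dirichlet_energy g \<le> ennreal \<epsilon>"
      using small[OF \<epsilon>] by blast
    have [measurable]: "g \<in> borel_measurable borel"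
      using g(1) locally_integrable_borel_measurable unfolding weak_deriv_def by blast
    have "(\<integral>y. \<psi> y * deriv \<phi> y \<partial>lborel) = - (\<integral>y. g y * \<phi> y \<partial>lborel)"
      using g(1) \<phi> unfolding weak_deriv_def by blast
    then have "X = \<bar>\<integral>y. g y * \<phi> y \<partial>lborel\<bar>"
      unfolding X_def by (simp only: abs_minus_cancel)
    also have "\<dots> \<le> \<epsilon> / \<delta> + \<delta> * \<beta>"
      by (rule abs_integral_mult_le_dirichlet_energy) (use g(2) \<beta> \<epsilon> \<delta> in auto)
    finally show ?thesis .
  qed
  have bound_by_\<delta>: "X \<le> \<delta> * \<beta>" if \<delta>: "\<delta> > 0" for \<delta>
  proof (rule field_le_epsilon)
    fix e :: real assume e: "e > 0"
    have "X \<le> e * \<delta> / \<delta> + \<delta> * \<beta>"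
      using bound[OF mult_pos_pos[OF e \<delta>] \<delta>] .
    then show "X \<le> \<delta> * \<beta> + e"
      using \<delta> by simp
  qed
  have "X \<le> 0 + e" if e: "e > 0" for e
  proof -
    have "X \<le> e / (\<beta> + 1) * \<beta>"
      using bound_by_\<delta>[of "e / (\<beta> + 1)"] e \<beta>(1) by simp
    also have "\<dots> \<le> e"
      using e \<beta>(1) by (simp add: field_simps)
    finally show ?thesis by simp
  qed
  then have "X \<le> 0"
    by (rule field_le_epsilon)
  then show ?thesis
    unfolding X_def by simp
qed

theorem mainTheorem10:
  fixes z :: "real \<Rightarrow> real" and W D :: real
  assumes z_nonneg: "\<forall>\<phi>>0. 0 \<le> z \<phi>"
    and z_mono: "antimono_on {0<..} z"
    and z_lsc: "lsc_on {0<..} z"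
    and sqrt_int: "(\<integral>\<^sup>+ \<phi>\<in>{0..1}. ennreal (sqrt (c_of z \<phi>)) \<partial>lborel) < \<infinity>"
    and W_pos: "W > 0"
    and deriv0: "((\<lambda>w. enn2real (tau (c_of z) w)) has_real_derivative D) (at_right 0)"
    and linear: "\<forall>w\<in>{0..W}. tau (c_of z) w = ennreal (D * w)"
  shows "\<forall>w\<in>{0<..<W}. \<not> (\<exists>\<psi>. (\<forall>y. 0 \<le> \<psi> y) \<and> integrable lborel \<psi> \<and>
            (\<integral>y. \<psi> y \<partial>lborel) = w \<and> energy (c_of z) \<psi> = tau (c_of z) w)"
proof (intro ballI notI)
  fix w assume w: "w \<in> {0<..<W}"
  assume "\<exists>\<psi>. (\<forall>y. 0 \<le> \<psi> y) \<and> integrable lborel \<psi> \<and>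
            (\<integral>y. \<psi> y \<partial>lborel) = w \<and> energy (c_of z) \<psi> = tau (c_of z) w"
  then obtain \<psi> where \<psi>: "\<forall>y. 0 \<le> \<psi> y" "integrable lborel \<psi>" "(\<integral>y. \<psi> y \<partial>lborel) = w"
    and minimal: "energy (c_of z) \<psi> = tau (c_of z) w"
    by blast
  define L where "L = min 2 (W / w)"
  have L: "1 < L" "L * w \<le> W"
    using w by (auto simp: L_def min_def field_simps)
  have "\<exists>g. weak_deriv \<psi> g \<and> dirichlet_energy g \<le> ennreal \<epsilon>" if "\<epsilon> > 0" for \<epsilon>
    using dirichlet_energy_of_minimiser_arbitrarily_small[OF _ borel_measurable_c_of[OF z_mono] \<psi>
        _ L(1) _ that] c_of_nonneg[OF z_nonneg] minimal linear w L
    by (simp add: mult_pos_pos less_imp_le)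
  then have "(\<integral>y. \<psi> y \<partial>lborel) = 0"
    using integral_mult_deriv_eq_0_if_dirichlet_energy_small
    by (intro integral_eq_0_if_weak_deriv_0 \<psi>(1,2)) blast
  with w \<psi>(3) show False by simp
qed

end
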